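(* Fix a monomial order on $S$. Let $J$ be a binomial ideal of $S$ and let $(E_i)_{i\in\Lambda}$ be a family of monomial ideals of $S$. Assume that for each $i\in\Lambda$, $F_i\supseteq E_i$ is a monomial ideal such that $(J,F_i)$ is a G-nice pair and $J+E_i=J+F_i$. Then $$\bigcap_{i\in\Lambda}(J+E_i)=J+\bigcap_{i\in\Lambda}\widehat{E_i}=J+\bigcap_{i\in\Lambda}F_i,$$ where each $\widehat{E_i}$ is taken with respect to $J$.
   Context: $K$ is a field and $S=K[x_1,\ldots,x_n]$ with a fixed monomial order. For $0\neq f\in S$, $\mathrm{in}(f)$ denotes its leading monomial; for an ideal $I$, $\mathrm{in}(I)$ is the ideal generated by the leading monomials of the nonzero elements of $I$. A pair $(J,E)$ of ideals is G-nice if $\mathrm{in}(J+E)=\mathrm{in}(J)+\mathrm{in}(E)$. A binomial ideal is an ideal generated by binomials. For an ideal $J$ and a monomial ideal $E$, $\widehat E$ (the G-nice monomial closure of $E$ with respect to $J$) is the intersection of all monomial ideals $F$ of $S$ with $E\subseteq F$ and $(J,F)$ G-nice. *)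

theory Defs
  imports "HOL-Library.Poly_Mapping"
begin

text \<open>Polynomial ring S = K[x_v : v in 'n] over a field K, with 'n a finite type of variables.\<close>

type_synonym ('n, 'a) mpoly = "('n \<Rightarrow>\<^sub>0 nat) \<Rightarrow>\<^sub>0 'a"

definition monomial_order :: "(('n \<Rightarrow>\<^sub>0 nat) \<Rightarrow> ('n \<Rightarrow>\<^sub>0 nat) \<Rightarrow> bool) \<Rightarrow> bool" where
  "monomial_order le \<longleftrightarrow>
     (\<forall>a. le a a) \<and>
     (\<forall>a b. le a b \<and> le b a \<longrightarrow> a = b) \<and>
     (\<forall>a b c. le a b \<and> le b c \<longrightarrow> le a c) \<and>
     (\<forall>a b. le a b \<or> le b a) \<and>
     (\<forall>a b c. le a b \<longrightarrow> le (a + c) (b + c)) \<and>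
     (\<forall>a. le 0 a)"

definition monom :: "('n \<Rightarrow>\<^sub>0 nat) \<Rightarrow> ('n, 'a::field) mpoly" where
  "monom alpha = Poly_Mapping.single alpha 1"

definition lead_mon :: "(('n \<Rightarrow>\<^sub>0 nat) \<Rightarrow> ('n \<Rightarrow>\<^sub>0 nat) \<Rightarrow> bool) \<Rightarrow> ('n, 'a::field) mpoly \<Rightarrow> ('n \<Rightarrow>\<^sub>0 nat)" where
  "lead_mon le f = (THE m. m \<in> Poly_Mapping.keys f \<and> (\<forall>m'\<in>Poly_Mapping.keys f. le m' m))"

definition is_ideal :: "'r::comm_ring_1 set \<Rightarrow> bool" where
  "is_ideal I \<longleftrightarrow> 0 \<in> I \<and> (\<forall>x\<in>I. \<forall>y\<in>I. x + y \<in> I) \<and> (\<forall>r. \<forall>x\<in>I. r * x \<in> I)"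

definition ideal_gen :: "'r::comm_ring_1 set \<Rightarrow> 'r set" where
  "ideal_gen G = \<Inter>{I. is_ideal I \<and> G \<subseteq> I}"

definition ideal_sum :: "'r::comm_ring_1 set \<Rightarrow> 'r set \<Rightarrow> 'r set" where
  "ideal_sum I J = {x + y | x y. x \<in> I \<and> y \<in> J}"

definition init_ideal :: "(('n \<Rightarrow>\<^sub>0 nat) \<Rightarrow> ('n \<Rightarrow>\<^sub>0 nat) \<Rightarrow> bool) \<Rightarrow> ('n, 'a::field) mpoly set \<Rightarrow> ('n, 'a) mpoly set" where
  "init_ideal le I = ideal_gen {monom (lead_mon le f) | f. f \<in> I \<and> f \<noteq> 0}"

definition monomial_ideal :: "('n, 'a::field) mpoly set \<Rightarrow> bool" where
  "monomial_ideal I \<longleftrightarrow> (\<exists>A. I = ideal_gen (monom ` A))"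

definition is_binomial :: "('n, 'a::field) mpoly \<Rightarrow> bool" where
  "is_binomial f \<longleftrightarrow> card (Poly_Mapping.keys f) \<le> 2"

definition binomial_ideal :: "('n, 'a::field) mpoly set \<Rightarrow> bool" where
  "binomial_ideal I \<longleftrightarrow> (\<exists>B. (\<forall>b\<in>B. is_binomial b) \<and> I = ideal_gen B)"

definition G_nice :: "(('n \<Rightarrow>\<^sub>0 nat) \<Rightarrow> ('n \<Rightarrow>\<^sub>0 nat) \<Rightarrow> bool) \<Rightarrow> ('n, 'a::field) mpoly set \<Rightarrow> ('n, 'a) mpoly set \<Rightarrow> bool" where
  "G_nice le J E \<longleftrightarrow> init_ideal le (ideal_sum J E) = ideal_sum (init_ideal le J) (init_ideal le E)"

definition G_closure :: "(('n \<Rightarrow>\<^sub>0 nat) \<Rightarrow> ('n \<Rightarrow>\<^sub>0 nat) \<Rightarrow> bool) \<Rightarrow> ('n, 'a::field) mpoly set \<Rightarrow> ('n, 'a) mpoly set \<Rightarrow> ('n, 'a) mpoly set" where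
  "G_closure le J E = \<Inter>{F. monomial_ideal F \<and> E \<subseteq> F \<and> G_nice le J F}"

end

theory Submission
  imports Defs "HOL.Topological_Spaces"
begin

text \<open>
  Call a polynomial standard for \<open>J\<close> if none of its monomials lies in \<open>in(J)\<close>. Every
  polynomial is congruent modulo \<open>J\<close> to a standard one (division by the leading monomials
  of \<open>J\<close>, which terminates because a monomial order is a well-order by Dickson's lemma).
  If \<open>(J, F)\<close> is G-nice and \<open>F\<close> is monomial, a standard element \<open>r\<close> of \<open>J + F\<close> lies in \<open>F\<close>:
  its leading monomial lies in \<open>in(J + F) = in(J) + in(F)\<close> but not in \<open>in(J)\<close>, hence in \<open>F\<close>,
  and we may strip the leading term and repeat. So a standard representative of an element
  of \<open>\<Inter>(J + E\<^sub>i)\<close> lies in every monomial ideal \<open>F \<supseteq> E\<^sub>i\<close> with \<open>(J, F)\<close> G-nice, hence in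
  the G-nice closure of \<open>E\<^sub>i\<close>. The remaining inclusions hold because that closure lies in
  \<open>F\<^sub>i\<close> and \<open>J + F\<^sub>i = J + E\<^sub>i\<close>.
\<close>

section \<open>Dickson's lemma\<close>

lemma nat_seq_mono_subseq:
  fixes s :: "nat \<Rightarrow> nat"
  obtains \<sigma> :: "nat \<Rightarrow> nat" where "strict_mono \<sigma>" "mono (s \<circ> \<sigma>)"
proof -
  obtain f where f: "strict_mono f" "monoseq (s \<circ> f)"
    using seq_monosub[of s] by (auto simp: comp_def)
  show thesis
  proof (cases "mono (s \<circ> f)")
    case True
    then show thesis using that f(1) by blast
  next
    case False
    then have antimono: "s (f n) \<le> s (f m)" if "m \<le> n" for m n
      using f(2) that unfolding monoseq_def mono_def by auto
    obtain N where N: "\<And>k. s (f N) \<le> s (f k)"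
      using ex_has_least_nat[of "\<lambda>_. True" 0 "s \<circ> f"] by auto
    \<comment> \<open>a non-increasing sequence of naturals is constant from its minimum on\<close>
    have "mono (s \<circ> (\<lambda>k. f (k + N)))"
      using antimono[of N] N by (intro monoI) (metis comp_apply le_add2 order_trans)
    moreover have "strict_mono (\<lambda>k. f (k + N))"
      using f(1) by (simp add: strict_mono_def)
    ultimately show thesis using that by blast
  qed
qed

lemma mono_subseq_coordinates:
  fixes a :: "nat \<Rightarrow> ('n \<Rightarrow>\<^sub>0 nat)"
  assumes "finite V"
  shows "\<exists>\<sigma> :: nat \<Rightarrow> nat. strict_mono \<sigma> \<and> (\<forall>v\<in>V. mono (\<lambda>i. Poly_Mapping.lookup (a (\<sigma> i)) v))"
  using assms
proof (induction V rule: finite_induct)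
  case empty
  show ?case using strict_mono_id by blast
next
  case (insert v V)
  obtain \<sigma> :: "nat \<Rightarrow> nat" where \<sigma>: "strict_mono \<sigma>" "\<forall>w\<in>V. mono (\<lambda>i. Poly_Mapping.lookup (a (\<sigma> i)) w)"
    using insert.IH by blast
  obtain \<tau> :: "nat \<Rightarrow> nat" where \<tau>: "strict_mono \<tau>" "mono ((\<lambda>i. Poly_Mapping.lookup (a (\<sigma> i)) v) \<circ> \<tau>)"
    using nat_seq_mono_subseq by blast
  have "strict_mono (\<sigma> \<circ> \<tau>)"
    using \<sigma>(1) \<tau>(1) by (simp add: strict_mono_def)
  moreover have "mono (\<lambda>i. Poly_Mapping.lookup (a ((\<sigma> \<circ> \<tau>) i)) w)" if "w \<in> V" for w
    using \<sigma>(2) that strict_mono_mono[OF \<tau>(1)] by (auto simp: mono_def)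
  ultimately show ?case
    using \<tau>(2) by (auto simp: comp_def)
qed

lemma dickson_poly_mapping:
  fixes a :: "nat \<Rightarrow> ('n::finite \<Rightarrow>\<^sub>0 nat)"
  obtains i j d where "i < j" "a j = a i + d"
proof -
  obtain \<sigma> :: "nat \<Rightarrow> nat" where \<sigma>: "strict_mono \<sigma>" "\<And>v. mono (\<lambda>i. Poly_Mapping.lookup (a (\<sigma> i)) v)"
    using mono_subseq_coordinates[OF finite_UNIV, of a] by blast
  have "a (\<sigma> 1) = a (\<sigma> 0) + (a (\<sigma> 1) - a (\<sigma> 0))"
    using \<sigma>(2) by (intro poly_mapping_eqI) (auto simp: lookup_add lookup_minus mono_def)
  moreover have "\<sigma> 0 < \<sigma> 1"
    using \<sigma>(1) by (simp add: strict_mono_def)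
  ultimately show thesis using that by blast
qed

lemma
  assumes "monomial_order le"
  shows monomial_order_refl: "le a a"
    and monomial_order_antisym: "le a b \<Longrightarrow> le b a \<Longrightarrow> a = b"
    and monomial_order_trans: "le a b \<Longrightarrow> le b c \<Longrightarrow> le a c"
    and monomial_order_linear: "le a b \<or> le b a"
    and monomial_order_add_right: "le a b \<Longrightarrow> le (a + c) (b + c)"
    and monomial_order_zero_least: "le 0 a"
  using assms unfolding monomial_order_def by blast+

definition monomial_less :: "(('n \<Rightarrow>\<^sub>0 nat) \<Rightarrow> ('n \<Rightarrow>\<^sub>0 nat) \<Rightarrow> bool) \<Rightarrow> ('n \<Rightarrow>\<^sub>0 nat) rel" where
  "monomial_less le = {(a, b). le a b \<and> a \<noteq> b}"

context
  fixes le :: "('n \<Rightarrow>\<^sub>0 nat) \<Rightarrow> ('n \<Rightarrow>\<^sub>0 nat) \<Rightarrow> bool"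
  assumes mo: "monomial_order le"
begin

lemma monomial_order_le_add: "le a (a + d)"
proof -
  have "le (0 + a) (d + a)"
    using monomial_order_add_right[OF mo monomial_order_zero_least[OF mo]] .
  then show ?thesis by (simp add: add.commute)
qed

lemma monomial_order_finite_max:
  assumes "finite A" "A \<noteq> {}"
  obtains m where "m \<in> A" "\<And>x. x \<in> A \<Longrightarrow> le x m"
proof -
  have "\<exists>m\<in>A. \<forall>x\<in>A. le x m"
    using assms
  proof (induction A rule: finite_ne_induct)
    case (singleton x)
    then show ?case using monomial_order_refl[OF mo] by blast
  next
    case (insert x A)
    then obtain m where m: "m \<in> A" "\<forall>y\<in>A. le y m" by blast
    show ?case
    proof (cases "le x m")
      case True
      then show ?thesis using m by blast
    next
      case False
      then have "\<forall>y\<in>A. le y x"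
        using m(2) monomial_order_linear[OF mo] monomial_order_trans[OF mo] by blast
      then show ?thesis using monomial_order_refl[OF mo] by blast
    qed
  qed
  then show thesis using that by blast
qed

lemma
  fixes f :: "('n, 'a::field) mpoly"
  assumes "f \<noteq> 0"
  shows lead_mon_in_keys: "lead_mon le f \<in> Poly_Mapping.keys f"
    and lead_mon_greatest: "k \<in> Poly_Mapping.keys f \<Longrightarrow> le k (lead_mon le f)"
proof -
  obtain m where m: "m \<in> Poly_Mapping.keys f" "\<And>k. k \<in> Poly_Mapping.keys f \<Longrightarrow> le k m"
    using monomial_order_finite_max[of "Poly_Mapping.keys f"] assms by auto
  then have "\<exists>!m. m \<in> Poly_Mapping.keys f \<and> (\<forall>k\<in>Poly_Mapping.keys f. le k m)"
    using monomial_order_antisym[OF mo] by blast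
  then have "lead_mon le f \<in> Poly_Mapping.keys f \<and> (\<forall>k\<in>Poly_Mapping.keys f. le k (lead_mon le f))"
    unfolding lead_mon_def by (rule theI')
  then show "lead_mon le f \<in> Poly_Mapping.keys f" and "k \<in> Poly_Mapping.keys f \<Longrightarrow> le k (lead_mon le f)"
    by blast+
qed

end

lemma wf_monomial_less:
  fixes le :: "('n::finite \<Rightarrow>\<^sub>0 nat) \<Rightarrow> ('n \<Rightarrow>\<^sub>0 nat) \<Rightarrow> bool"
  assumes mo: "monomial_order le"
  shows "wf (monomial_less le)"
proof (unfold wf_iff_no_infinite_down_chain, rule notI)
  assume "\<exists>f. \<forall>i. (f (Suc i), f i) \<in> monomial_less le"
  then obtain f where step: "\<And>i. le (f (Suc i)) (f i)" and neq: "\<And>i. f (Suc i) \<noteq> f i"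
    by (auto simp: monomial_less_def)
  have below: "le (f j) (f (Suc i))" if "i < j" for i j
    using that
  proof (induction j)
    case (Suc j)
    then show ?case
      using step monomial_order_refl[OF mo] monomial_order_trans[OF mo] less_Suc_eq by metis
  qed simp
  obtain i j d where "i < j" "f j = f i + d"
    using dickson_poly_mapping[of f] by blast
  then have "le (f i) (f (Suc i))"
    using below monomial_order_le_add[OF mo] monomial_order_trans[OF mo] by metis
  then show False
    using monomial_order_antisym[OF mo step[of i]] neq[of i] by blast
qed

lemma is_ideal_ideal_gen: "is_ideal (ideal_gen G)"
  unfolding is_ideal_def ideal_gen_def by blast

lemma ideal_gen_superset: "G \<subseteq> ideal_gen G"
  unfolding ideal_gen_def by blast

lemma ideal_gen_least: "is_ideal I \<Longrightarrow> G \<subseteq> I \<Longrightarrow> ideal_gen G \<subseteq> I"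
  unfolding ideal_gen_def by blast

context
  fixes I :: "'r::comm_ring_1 set"
  assumes I: "is_ideal I"
begin

lemma ideal_zero: "0 \<in> I"
  using I unfolding is_ideal_def by blast

lemma ideal_add: "x \<in> I \<Longrightarrow> y \<in> I \<Longrightarrow> x + y \<in> I"
  using I unfolding is_ideal_def by blast

lemma ideal_mult: "x \<in> I \<Longrightarrow> r * x \<in> I"
  using I unfolding is_ideal_def by blast

lemma ideal_diff: "x \<in> I \<Longrightarrow> y \<in> I \<Longrightarrow> x - y \<in> I"
  using ideal_add ideal_mult[of y "-1"] by (metis diff_conv_add_uminus mult_minus1)

end

lemma binomial_ideal_is_ideal: "binomial_ideal J \<Longrightarrow> is_ideal J"
  unfolding binomial_ideal_def using is_ideal_ideal_gen by blast

lemma mem_ideal_sumI: "x \<in> I \<Longrightarrow> y \<in> J \<Longrightarrow> x + y \<in> ideal_sum I J"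
  unfolding ideal_sum_def by blast

lemma mem_ideal_sumE:
  assumes "z \<in> ideal_sum I J"
  obtains x y where "z = x + y" "x \<in> I" "y \<in> J"
  using assms unfolding ideal_sum_def by blast

lemma ideal_sum_mono: "E \<subseteq> F \<Longrightarrow> ideal_sum J E \<subseteq> ideal_sum J F"
  unfolding ideal_sum_def by blast

lemma ideal_sum_diff_left:
  assumes "is_ideal J" "z \<in> ideal_sum J E" "j \<in> J"
  shows "z - j \<in> ideal_sum J E"
proof -
  obtain x y where "z = x + y" "x \<in> J" "y \<in> E"
    using assms(2) by (rule mem_ideal_sumE)
  then show ?thesis
    using ideal_diff[OF assms(1)] assms(3) mem_ideal_sumI[of "x - j" J y E]
    by (simp add: algebra_simps)
qed

lemma keys_single_mult: "Poly_Mapping.keys (Poly_Mapping.single d c * g) \<subseteq> (+) d ` Poly_Mapping.keys g"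
  using keys_mult[of "Poly_Mapping.single d c" g] by (auto split: if_splits)

lemma lookup_single_mult_add:
  fixes g :: "('n, 'a::field) mpoly"
  shows "Poly_Mapping.lookup (Poly_Mapping.single d c * g) (d + x) = c * Poly_Mapping.lookup g x"
proof -
  have "Poly_Mapping.lookup (Poly_Mapping.single d c * g) (d + x)
      = (\<Sum>l. (c * (\<Sum>q. Poly_Mapping.lookup g q when d + x = l + q)) when d = l)"
    by (simp add: lookup_mult lookup_single when_mult)
  also have "\<dots> = c * (\<Sum>q. Poly_Mapping.lookup g q when x = q)"
    by simp
  finally show ?thesis by simp
qed

lemma monom_add: "(monom (a + b) :: ('n, 'a::field) mpoly) = monom a * monom b"
  unfolding monom_def by (simp add: mult_single)

lemma keys_monom [simp]: "Poly_Mapping.keys (monom a :: ('n, 'a::field) mpoly) = {a}"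
  unfolding monom_def by simp

lemma single_eq_scaled_monom:
  "(Poly_Mapping.single m c :: ('n, 'a::field) mpoly) = Poly_Mapping.single 0 c * monom m"
  unfolding monom_def by (simp add: mult_single)

lemma keys_ideal_gen_monom:
  assumes "p \<in> ideal_gen (monom ` A :: ('n, 'a::field) mpoly set)" "k \<in> Poly_Mapping.keys p"
  obtains a d where "a \<in> A" "k = a + d"
proof -
  define D :: "('n, 'a) mpoly set" where "D = {p. \<forall>k\<in>Poly_Mapping.keys p. \<exists>a\<in>A. \<exists>d. k = a + d}"
  have "is_ideal D"
    unfolding is_ideal_def
  proof (intro conjI ballI allI)
    show "0 \<in> D" by (simp add: D_def)
  next
    fix x y assume "x \<in> D" "y \<in> D"
    then show "x + y \<in> D"
      using keys_add[of x y] unfolding D_def by blast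
  next
    fix r x assume x: "x \<in> D"
    show "r * x \<in> D"
      unfolding D_def mem_Collect_eq
    proof
      fix k assume "k \<in> Poly_Mapping.keys (r * x)"
      then obtain b c where "k = b + c" "c \<in> Poly_Mapping.keys x"
        using keys_mult by blast
      moreover obtain a d where "a \<in> A" "c = a + d"
        using x calculation(2) unfolding D_def by blast
      ultimately show "\<exists>a\<in>A. \<exists>d. k = a + d"
        by (metis add.left_commute)
    qed
  qed
  moreover have "monom ` A \<subseteq> D"
    unfolding D_def by (auto intro!: exI[of _ 0])
  ultimately have "p \<in> D"
    using ideal_gen_least assms(1) by blast
  then show thesis
    using assms(2) that unfolding D_def by blast
qed

lemma monomial_ideal_is_ideal: "monomial_ideal F \<Longrightarrow> is_ideal F"
  unfolding monomial_ideal_def using is_ideal_ideal_gen by blast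

lemma monomial_ideal_monom_keys:
  fixes F :: "('n, 'a::field) mpoly set"
  assumes "monomial_ideal F" "p \<in> F" "k \<in> Poly_Mapping.keys p"
  shows "monom k \<in> F"
proof -
  obtain A where A: "F = ideal_gen (monom ` A)"
    using assms(1) unfolding monomial_ideal_def by blast
  obtain a d where "a \<in> A" "k = a + d"
    using keys_ideal_gen_monom assms(2,3) A by metis
  then have "monom d * monom a \<in> F"
    using A ideal_gen_superset ideal_mult[OF is_ideal_ideal_gen] by blast
  then show ?thesis
    using \<open>k = a + d\<close> by (simp add: monom_add mult.commute)
qed

lemma monomial_ideal_single:
  "monomial_ideal F \<Longrightarrow> monom m \<in> F \<Longrightarrow> Poly_Mapping.single m c \<in> F"
  using single_eq_scaled_monom ideal_mult[OF monomial_ideal_is_ideal] by metis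

lemma monom_mem_ideal_sum_monomial:
  fixes I1 I2 :: "('n, 'a::field) mpoly set"
  assumes "monomial_ideal I1" "monomial_ideal I2" "monom m \<in> ideal_sum I1 I2"
  shows "monom m \<in> I1 \<or> monom m \<in> I2"
proof -
  obtain p q where pq: "monom m = p + q" "p \<in> I1" "q \<in> I2"
    using assms(3) by (rule mem_ideal_sumE)
  have "Poly_Mapping.lookup p m + Poly_Mapping.lookup q m = 1"
    using arg_cong[OF pq(1), of "\<lambda>f. Poly_Mapping.lookup f m"] by (simp add: monom_def lookup_add)
  then have "m \<in> Poly_Mapping.keys p \<or> m \<in> Poly_Mapping.keys q"
    by (auto simp: in_keys_iff)
  then show ?thesis
    using monomial_ideal_monom_keys assms(1,2) pq(2,3) by blast
qed

section \<open>Initial ideals\<close>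

lemma init_ideal_eq_ideal_gen_lead_mons:
  "init_ideal le I = ideal_gen (monom ` {lead_mon le f | f. f \<in> I \<and> f \<noteq> 0})"
  unfolding init_ideal_def by (rule arg_cong[where f = ideal_gen]) auto

lemma monomial_ideal_init_ideal: "monomial_ideal (init_ideal le I)"
  unfolding monomial_ideal_def init_ideal_eq_ideal_gen_lead_mons by blast

lemma monom_lead_mon_mem_init_ideal:
  "f \<in> I \<Longrightarrow> f \<noteq> 0 \<Longrightarrow> monom (lead_mon le f) \<in> init_ideal le I"
  unfolding init_ideal_def by (rule subsetD[OF ideal_gen_superset]) blast

lemma init_ideal_subset_monomial_ideal:
  fixes F :: "('n, 'a::field) mpoly set"
  assumes "monomial_order le" "monomial_ideal F"
  shows "init_ideal le F \<subseteq> F"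
  unfolding init_ideal_def
proof (rule ideal_gen_least[OF monomial_ideal_is_ideal[OF assms(2)]], rule subsetI)
  fix x :: "('n, 'a) mpoly"
  assume "x \<in> {monom (lead_mon le f) | f. f \<in> F \<and> f \<noteq> 0}"
  then obtain f where "x = monom (lead_mon le f)" "f \<in> F" "f \<noteq> 0"
    by blast
  then show "x \<in> F"
    using monomial_ideal_monom_keys[OF assms(2)] lead_mon_in_keys[OF assms(1)] by blast
qed

lemma init_ideal_monom_lead:
  fixes J :: "('n, 'a::field) mpoly set"
  assumes mo: "monomial_order le" and J: "is_ideal J" and m: "monom m \<in> init_ideal le J"
  obtains h where "h \<in> J" "Poly_Mapping.lookup h m = c" "\<And>k. k \<in> Poly_Mapping.keys h \<Longrightarrow> le k m"
proof -
  have "(monom m :: ('n, 'a) mpoly) \<in> ideal_gen (monom ` {lead_mon le f | f. f \<in> J \<and> f \<noteq> 0})"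
    using m unfolding init_ideal_eq_ideal_gen_lead_mons .
  then obtain a d where "a \<in> {lead_mon le f | f. f \<in> J \<and> f \<noteq> 0}" "m = a + d"
    by (rule keys_ideal_gen_monom) (simp add: monom_def)
  then obtain g where g: "g \<in> J" "g \<noteq> 0" and m_eq: "m = d + lead_mon le g"
    by (auto simp: add.commute)
  define h where "h = Poly_Mapping.single d (c / Poly_Mapping.lookup g (lead_mon le g)) * g"
  have "Poly_Mapping.lookup g (lead_mon le g) \<noteq> 0"
    using lead_mon_in_keys[OF mo g(2)] by (simp add: in_keys_iff)
  then have "Poly_Mapping.lookup h m = c"
    unfolding h_def m_eq lookup_single_mult_add by simp
  moreover have "le k m" if k: "k \<in> Poly_Mapping.keys h" for k
  proof -
    obtain b where b: "b \<in> Poly_Mapping.keys g" "k = d + b"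
      using k keys_single_mult unfolding h_def by blast
    then have "le (b + d) (lead_mon le g + d)"
      using lead_mon_greatest[OF mo g(2)] monomial_order_add_right[OF mo] by blast
    then show ?thesis
      using b(2) m_eq by (simp add: add.commute)
  qed
  moreover have "h \<in> J"
    unfolding h_def using ideal_mult[OF J g(1)] .
  ultimately show thesis using that by blast
qed

section \<open>Standard polynomials\<close>

definition init_keys ::
  "(('n \<Rightarrow>\<^sub>0 nat) \<Rightarrow> ('n \<Rightarrow>\<^sub>0 nat) \<Rightarrow> bool) \<Rightarrow> ('n, 'a::field) mpoly set \<Rightarrow> ('n, 'a) mpoly \<Rightarrow> ('n \<Rightarrow>\<^sub>0 nat) set"
where
  "init_keys le J r = {k \<in> Poly_Mapping.keys r. monom k \<in> init_ideal le J}"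

definition standard_poly ::
  "(('n \<Rightarrow>\<^sub>0 nat) \<Rightarrow> ('n \<Rightarrow>\<^sub>0 nat) \<Rightarrow> bool) \<Rightarrow> ('n, 'a::field) mpoly set \<Rightarrow> ('n, 'a) mpoly \<Rightarrow> bool"
where
  "standard_poly le J r \<longleftrightarrow> init_keys le J r = {}"

lemma finite_init_keys: "finite (init_keys le J r)"
  unfolding init_keys_def by simp

lemma init_keys_reduce:
  fixes J :: "('n, 'a::field) mpoly set"
  assumes mo: "monomial_order le" and J: "is_ideal J"
    and m: "m \<in> init_keys le J r" and top: "\<And>k. k \<in> init_keys le J r \<Longrightarrow> le k m"
  obtains h where "h \<in> J" "\<And>k. k \<in> init_keys le J (r - h) \<Longrightarrow> le k m \<and> k \<noteq> m"
proof -
  have "monom m \<in> init_ideal le J"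
    using m unfolding init_keys_def by blast
  then obtain h where h: "h \<in> J" "Poly_Mapping.lookup h m = Poly_Mapping.lookup r m"
      "\<And>k. k \<in> Poly_Mapping.keys h \<Longrightarrow> le k m"
    using init_ideal_monom_lead[OF mo J, where c = "Poly_Mapping.lookup r m"] by blast
  have "le k m \<and> k \<noteq> m" if k: "k \<in> init_keys le J (r - h)" for k
  proof
    have "k \<in> init_keys le J r \<or> k \<in> Poly_Mapping.keys h"
      using k keys_diff[of r h] unfolding init_keys_def by blast
    then show "le k m"
      using top h(3) by blast
    have "m \<notin> Poly_Mapping.keys (r - h)"
      using h(2) by (simp add: in_keys_iff lookup_minus)
    then show "k \<noteq> m"
      using k unfolding init_keys_def by blast
  qed
  then show thesis
    using that h(1) by blast
qed

text \<open>Termination of the division algorithm, as a minimal counterexample argument: among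
  all representatives of \<open>f\<close> modulo \<open>J\<close>, one whose largest monomial in \<open>in(J)\<close> is minimal
  cannot be reduced further.\<close>

lemma ex_standard_representative:
  fixes J :: "('n::finite, 'a::field) mpoly set"
  assumes mo: "monomial_order le" and J: "is_ideal J"
  obtains r where "f - r \<in> J" "standard_poly le J r"
proof -
  have "\<exists>r. f - r \<in> J \<and> standard_poly le J r"
  proof (rule ccontr)
    assume "\<nexists>r. f - r \<in> J \<and> standard_poly le J r"
    then have nonstandard: "init_keys le J r \<noteq> {}" if "f - r \<in> J" for r
      using that unfolding standard_poly_def by blast
    define top_in where
      "top_in r m \<longleftrightarrow> m \<in> init_keys le J r \<and> (\<forall>k\<in>init_keys le J r. le k m)" for r m
    have top_ex: "\<exists>m. top_in r m" if r: "f - r \<in> J" for r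
      using monomial_order_finite_max[OF mo finite_init_keys nonstandard[OF r]]
      unfolding top_in_def by metis
    define tops where "tops = {m. \<exists>r. f - r \<in> J \<and> top_in r m}"
    have "f - f \<in> J"
      using ideal_zero[OF J] by simp
    then have "tops \<noteq> {}"
      using top_ex unfolding tops_def by blast
    then obtain m where "m \<in> tops" and minimal: "\<And>m'. (m', m) \<in> monomial_less le \<Longrightarrow> m' \<notin> tops"
      using wfE_min[OF wf_monomial_less[OF mo]] by (metis ex_in_conv)
    then obtain r where r: "f - r \<in> J" "top_in r m"
      unfolding tops_def by blast
    then obtain h where h: "h \<in> J" "\<And>k. k \<in> init_keys le J (r - h) \<Longrightarrow> le k m \<and> k \<noteq> m"
      using init_keys_reduce[OF mo J] unfolding top_in_def by metis
    have "f - (r - h) \<in> J"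
      using ideal_add[OF J r(1) h(1)] by (simp add: algebra_simps)
    then obtain m' where "top_in (r - h) m'" "m' \<in> tops"
      using top_ex unfolding tops_def by blast
    then show False
      using minimal[of m'] h(2) unfolding top_in_def monomial_less_def by blast
  qed
  then show thesis
    using that by blast
qed

lemma keys_minus_term: "Poly_Mapping.keys (r - Poly_Mapping.single k (Poly_Mapping.lookup r k)) = Poly_Mapping.keys r - {k}"
  by (auto simp: in_keys_iff lookup_minus lookup_single when_def split: if_splits)

lemma standard_mem_ideal_sum_G_nice:
  fixes J F :: "('n, 'a::field) mpoly set"
  assumes mo: "monomial_order le" and J: "is_ideal J" and F: "monomial_ideal F"
    and nice: "G_nice le J F"
  shows "r \<in> ideal_sum J F \<Longrightarrow> standard_poly le J r \<Longrightarrow> r \<in> F"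
proof (induction "card (Poly_Mapping.keys r)" arbitrary: r)
  case 0
  then show ?case using ideal_zero[OF monomial_ideal_is_ideal[OF F]] by simp
next
  case (Suc n)
  have "r \<noteq> 0" using Suc.hyps(2) by auto
  define lm where "lm = lead_mon le r"
  have lm: "lm \<in> Poly_Mapping.keys r"
    unfolding lm_def using lead_mon_in_keys[OF mo \<open>r \<noteq> 0\<close>] .
  have "monom lm \<in> ideal_sum (init_ideal le J) (init_ideal le F)"
    using monom_lead_mon_mem_init_ideal[where le = le, OF Suc.prems(1) \<open>r \<noteq> 0\<close>] nice
    unfolding lm_def G_nice_def by simp
  moreover have "monom lm \<notin> init_ideal le J"
    using Suc.prems(2) lm unfolding standard_poly_def init_keys_def by blast
  ultimately have "monom lm \<in> F"
    using monom_mem_ideal_sum_monomial monomial_ideal_init_ideal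
      init_ideal_subset_monomial_ideal[OF mo F] by blast
  then have term_F: "Poly_Mapping.single lm (Poly_Mapping.lookup r lm) \<in> F"
    using monomial_ideal_single[OF F] by blast
  define q where "q = r - Poly_Mapping.single lm (Poly_Mapping.lookup r lm)"
  have keys_q: "Poly_Mapping.keys q = Poly_Mapping.keys r - {lm}"
    unfolding q_def by (rule keys_minus_term)
  obtain j x where "r = j + x" "j \<in> J" "x \<in> F"
    using Suc.prems(1) by (rule mem_ideal_sumE)
  then have "q \<in> ideal_sum J F"
    using ideal_diff[OF monomial_ideal_is_ideal[OF F] _ term_F] mem_ideal_sumI[of j J]
    unfolding q_def by (metis add_diff_eq)
  moreover have "standard_poly le J q"
    using Suc.prems(2) keys_q unfolding standard_poly_def init_keys_def by blast
  moreover have "n = card (Poly_Mapping.keys q)"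
    using Suc.hyps(2) keys_q lm by simp
  ultimately have "q \<in> F" using Suc.hyps(1) by blast
  then have "q + Poly_Mapping.single lm (Poly_Mapping.lookup r lm) \<in> F"
    using ideal_add[OF monomial_ideal_is_ideal[OF F] _ term_F] by blast
  then show ?case
    unfolding q_def by simp
qed

section \<open>The G-nice monomial closure\<close>

lemma G_closure_subset:
  "monomial_ideal F \<Longrightarrow> E \<subseteq> F \<Longrightarrow> G_nice le J F \<Longrightarrow> G_closure le J E \<subseteq> F"
  unfolding G_closure_def by blast

lemma standard_mem_G_closure:
  assumes "monomial_order le" "is_ideal J" "r \<in> ideal_sum J E" "standard_poly le J r"
  shows "r \<in> G_closure le J E"
  unfolding G_closure_def
proof (rule InterI)
  fix F assume "F \<in> {F. monomial_ideal F \<and> E \<subseteq> F \<and> G_nice le J F}"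
  then have F: "monomial_ideal F" "E \<subseteq> F" "G_nice le J F"
    by simp_all
  have "r \<in> ideal_sum J F"
    using ideal_sum_mono[OF F(2)] assms(3) by blast
  then show "r \<in> F"
    using standard_mem_ideal_sum_G_nice[OF assms(1,2) F(1,3)] assms(4) by blast
qed

theorem mainTheorem13:
  fixes le :: "('n::finite \<Rightarrow>\<^sub>0 nat) \<Rightarrow> ('n \<Rightarrow>\<^sub>0 nat) \<Rightarrow> bool"
    and J :: "('n, 'a::field) mpoly set"
    and \<Lambda> :: "'i set"
    and E F :: "'i \<Rightarrow> ('n, 'a) mpoly set"
  assumes "monomial_order le"
    and "binomial_ideal J"
    and "\<And>i. i \<in> \<Lambda> \<Longrightarrow> monomial_ideal (E i)"
    and "\<And>i. i \<in> \<Lambda> \<Longrightarrow> monomial_ideal (F i)"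
    and "\<And>i. i \<in> \<Lambda> \<Longrightarrow> E i \<subseteq> F i"
    and "\<And>i. i \<in> \<Lambda> \<Longrightarrow> G_nice le J (F i)"
    and "\<And>i. i \<in> \<Lambda> \<Longrightarrow> ideal_sum J (E i) = ideal_sum J (F i)"
  shows "(\<Inter>i\<in>\<Lambda>. ideal_sum J (E i)) = ideal_sum J (\<Inter>i\<in>\<Lambda>. G_closure le J (E i))
    \<and> ideal_sum J (\<Inter>i\<in>\<Lambda>. G_closure le J (E i)) = ideal_sum J (\<Inter>i\<in>\<Lambda>. F i)"
proof -
  have J: "is_ideal J"
    using assms(2) by (rule binomial_ideal_is_ideal)
  have A: "(\<Inter>i\<in>\<Lambda>. ideal_sum J (E i)) \<subseteq> ideal_sum J (\<Inter>i\<in>\<Lambda>. G_closure le J (E i))"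
  proof
    fix x assume x: "x \<in> (\<Inter>i\<in>\<Lambda>. ideal_sum J (E i))"
    obtain r where r: "x - r \<in> J" "standard_poly le J r"
      using ex_standard_representative[OF assms(1) J] by blast
    have "r \<in> G_closure le J (E i)" if i: "i \<in> \<Lambda>" for i
    proof -
      have "x - (x - r) \<in> ideal_sum J (E i)"
        using ideal_sum_diff_left[OF J _ r(1)] x i by blast
      then show ?thesis
        using standard_mem_G_closure[OF assms(1) J _ r(2)] by simp
    qed
    then have "(x - r) + r \<in> ideal_sum J (\<Inter>i\<in>\<Lambda>. G_closure le J (E i))"
      by (intro mem_ideal_sumI[OF r(1)] INT_I)
    then show "x \<in> ideal_sum J (\<Inter>i\<in>\<Lambda>. G_closure le J (E i))"
      by simp
  qed
  have B: "ideal_sum J (\<Inter>i\<in>\<Lambda>. G_closure le J (E i)) \<subseteq> ideal_sum J (\<Inter>i\<in>\<Lambda>. F i)"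
    using G_closure_subset[OF assms(4-6)] by (intro ideal_sum_mono INT_anti_mono[OF order_refl])
  have C: "ideal_sum J (\<Inter>i\<in>\<Lambda>. F i) \<subseteq> (\<Inter>i\<in>\<Lambda>. ideal_sum J (E i))"
  proof (rule INT_greatest)
    fix i assume i: "i \<in> \<Lambda>"
    have "ideal_sum J (\<Inter>i\<in>\<Lambda>. F i) \<subseteq> ideal_sum J (F i)"
      using i by (intro ideal_sum_mono INT_lower)
    then show "ideal_sum J (\<Inter>i\<in>\<Lambda>. F i) \<subseteq> ideal_sum J (E i)"
      using assms(7)[OF i] by simp
  qed
  show ?thesis
    using subset_antisym[OF A order_trans[OF B C]] subset_antisym[OF B order_trans[OF C A]]
    by (rule conjI)
qed

end
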